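(* Let $U\subset\mathbb{C}$ be open. Let $\{F_t\}_{t\ge0}$ and $\{H_t\}_{t\ge0}$ be families of analytic maps $F_t:U\to U$, $H_t:U\to U$ such that: - $F_0(z)=z$ and $H_0(z)=z$; - $F_{t+s}(z)=F_t(F_s(z))$ and $H_{t+s}(z)=H_t(F_s(z))-F_s(z)+H_s(z)$ for all $s,t\ge0$, $z\in U$; - $(t,z)\mapsto F_t(z)$ and $(t,z)\mapsto H_t(z)$ are continuous on $[0,\infty)\times U$. Then there exist analytic functions $A_1,A_2$ on $U$ such that $$\frac{d}{dt}H_t(z)=A_1(F_t(z)),\qquad \frac{d}{dt}F_t(z)=A_2(F_t(z))$$ for all $z\in U$ and $t\in[0,\infty)$. *)

theory Defs
  imports "HOL-Analysis.Analysis"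
begin

end

theory Submission
  imports Defs "HOL-Complex_Analysis.Complex_Analysis"
begin

text \<open>
  Put \<open>\<Psi>\<^sub>\<tau> w = \<integral>\<^sub>0\<^sup>\<tau> F\<^sub>s w ds\<close>. By the semigroup law
  \<open>\<Psi>\<^sub>\<tau>(F\<^sub>t z)\<close> is the integral of the orbit of \<open>z\<close> over \<open>[t, t + \<tau>]\<close>,
  so it is differentiable in \<open>t\<close> with derivative \<open>F\<^sub>\<tau>(F\<^sub>t z) - F\<^sub>t z\<close>.
  The map \<open>\<Psi>\<^sub>\<tau>\<close> is holomorphic, and \<open>\<Psi>\<^sub>\<tau>' \<approx> \<tau>\<close> for small \<open>\<tau>\<close> since \<open>F\<^sub>0\<close> is
  the identity and \<open>F\<^sub>s'\<close> depends continuously on \<open>s\<close> (Cauchy estimates). Where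
  \<open>\<Psi>\<^sub>\<tau>' \<noteq> 0\<close> the orbit is therefore differentiable itself, with velocity
  \<open>(F\<^sub>\<tau> w - w) / \<Psi>\<^sub>\<tau>'(w)\<close> at \<open>w = F\<^sub>t z\<close>, a holomorphic function of \<open>w\<close>.
  Integrating the cocycle identity over \<open>s \<in> [0, 1]\<close> writes \<open>H\<^sub>t z\<close> as the integral of
  \<open>H\<^sub>r z\<close> over \<open>[t, t + 1]\<close>, minus \<open>\<Phi>(F\<^sub>t z)\<close> with \<open>\<Phi> w = \<integral>\<^sub>0\<^sup>1 H\<^sub>s w ds\<close>, plus
  \<open>F\<^sub>t z\<close>; differentiating in \<open>t\<close> gives a holomorphic function of \<open>F\<^sub>t z\<close> again.
\<close>

lemma has_vector_derivative_complex_iff_tendsto_quotient: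
  fixes f :: "real \<Rightarrow> complex"
  shows "(f has_vector_derivative D) (at x within S) \<longleftrightarrow>
         ((\<lambda>y. (f y - f x) / of_real (y - x)) \<longlongrightarrow> D) (at x within S)"
  by (simp add: has_vector_derivative_complex_iff has_field_derivative_iff tendsto_complex_iff
      Re_divide_of_real Im_divide_of_real)

lemma has_vector_derivative_inner_from_chain:
  fixes u V :: "real \<Rightarrow> complex"
  assumes g: "(g has_field_derivative d) (at (u x))" and d: "d \<noteq> 0"
    and u: "continuous (at x within S) u"
    and gV: "\<And>y. y \<in> S \<Longrightarrow> g (u y) = V y" and x: "x \<in> S"
    and V: "(V has_vector_derivative V') (at x within S)"
  shows "(u has_vector_derivative V' / d) (at x within S)"
proof -
  obtain q where q: "\<And>z. g z - g (u x) = q z * (z - u x)"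
    and qc: "isCont q (u x)" and qd: "q (u x) = d"
    using g unfolding CARAT_DERIV by blast
  have qu: "((\<lambda>y. q (u y)) \<longlongrightarrow> d) (at x within S)"
    using continuous_within_compose3[OF qc u] qd unfolding continuous_within o_def by simp
  then have ev: "eventually (\<lambda>y. q (u y) \<noteq> 0) (at x within S)"
    using d tendsto_imp_eventually_ne by blast
  have lim: "((\<lambda>y. ((V y - V x) / of_real (y - x)) / q (u y)) \<longlongrightarrow> V' / d) (at x within S)"
    using V unfolding has_vector_derivative_complex_iff_tendsto_quotient by (intro tendsto_divide qu d)
  show ?thesis unfolding has_vector_derivative_complex_iff_tendsto_quotient
  proof (rule Lim_transform_eventually[OF lim])
    have "eventually (\<lambda>y. y \<in> S \<and> y \<noteq> x) (at x within S)"
      by (simp add: eventually_at_filter)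
    with ev show "eventually (\<lambda>y. ((V y - V x) / of_real (y - x)) / q (u y) =
        (u y - u x) / of_real (y - x)) (at x within S)"
    proof eventually_elim
      case (elim y)
      have "V y - V x = q (u y) * (u y - u x)"
        using q[of "u y"] gV[of y] gV[OF x] elim(2) by simp
      moreover have "of_real (y - x) \<noteq> (0::complex)"
        using elim(2) by simp
      ultimately show ?case using elim(1) by simp
    qed
  qed
qed

lemma integral_has_vector_derivative_Ici:
  fixes f :: "real \<Rightarrow> 'a::banach"
  assumes f: "continuous_on {0..} f" and t: "t \<ge> 0"
  shows "((\<lambda>u. integral {0..u} f) has_vector_derivative f t) (at t within {0..})"
proof -
  have "((\<lambda>u. integral {0..u} f) has_vector_derivative f t) (at t within {0..t+1})"
    by (rule integral_has_vector_derivative) (use t in \<open>auto intro: continuous_on_subset[OF f]\<close>)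
  moreover have "at t within {0..t+1} = at t within {0..}"
    by (rule at_within_nhd[of _ "{..<t+1}"]) auto
  ultimately show ?thesis by simp
qed

lemma integral_shift_eq_diff:
  fixes f :: "real \<Rightarrow> 'a::banach"
  assumes f: "continuous_on {0..} f" and t: "t \<ge> 0" and \<tau>: "\<tau> \<ge> 0"
  shows "integral {0..\<tau>} (\<lambda>s. f (s + t)) = integral {0..t+\<tau>} f - integral {0..t} f"
proof -
  have "integral {0..\<tau>} (\<lambda>s. f (s + t)) = integral {t..t+\<tau>} f"
    using integral_shift_Icc_real[of 0 \<tau> f t] by (simp add: o_def add.commute)
  also have "\<dots> = integral {0..t+\<tau>} f - integral {0..t} f"
    using Henstock_Kurzweil_Integration.integral_combine[where a=0 and c=t and b="t+\<tau>" and f=f] t \<tau>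
      integrable_continuous_real[OF continuous_on_subset[OF f, of "{0..t+\<tau>}"]]
    by (auto simp: algebra_simps)
  finally show ?thesis .
qed

lemma integral_shift_has_vector_derivative:
  fixes f :: "real \<Rightarrow> 'a::banach"
  assumes f: "continuous_on {0..} f" and t: "t \<ge> 0" and \<tau>: "\<tau> \<ge> 0"
  shows "((\<lambda>u. integral {0..\<tau>} (\<lambda>s. f (s + u))) has_vector_derivative f (t + \<tau>) - f t)
           (at t within {0..})"
proof -
  have shift: "((\<lambda>u. u + \<tau>) has_vector_derivative 1) (at t within {0..})"
    by (auto intro!: derivative_eq_intros)
  have "((\<lambda>u. integral {0..u} f) has_vector_derivative f (t + \<tau>)) (at (t + \<tau>) within {0..})"
    using integral_has_vector_derivative_Ici[OF f] t \<tau> by simp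
  then have "((\<lambda>u. integral {0..u} f) has_vector_derivative f (t + \<tau>))
               (at (t + \<tau>) within (\<lambda>u. u + \<tau>) ` {0..})"
    by (rule has_vector_derivative_within_subset) (use \<tau> in auto)
  from vector_diff_chain_within[OF shift this]
  have "((\<lambda>u. integral {0..u + \<tau>} f) has_vector_derivative f (t + \<tau>)) (at t within {0..})"
    by (simp add: o_def)
  then have "((\<lambda>u. integral {0..u + \<tau>} f - integral {0..u} f) has_vector_derivative f (t + \<tau>) - f t)
               (at t within {0..})"
    by (intro has_vector_derivative_diff integral_has_vector_derivative_Ici f t)
  then show ?thesis
    by (rule has_vector_derivative_transform[rotated 2])
       (use t in \<open>auto simp: integral_shift_eq_diff[OF f _ \<tau>]\<close>)
qed

lemma dist_deriv_le_sphere_bound: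
  assumes f: "f holomorphic_on U" and g: "g holomorphic_on U" and U: "open U"
    and r: "r > 0" "cball w r \<subseteq> U"
    and bound: "\<And>x. dist w x = r \<Longrightarrow> dist (f x) (g x) \<le> M"
  shows "dist (deriv f w) (deriv g w) \<le> M / r"
proof -
  have "ball w r \<subseteq> U"
    using r(2) ball_subset_cball by blast
  then have "(\<lambda>x. f x - g x) holomorphic_on ball w r"
    by (intro holomorphic_on_diff holomorphic_on_subset[OF f] holomorphic_on_subset[OF g])
  moreover have "continuous_on (cball w r) (\<lambda>x. f x - g x)"
    by (intro continuous_on_diff holomorphic_on_imp_continuous_on
          holomorphic_on_subset[OF f r(2)] holomorphic_on_subset[OF g r(2)])
  ultimately have "norm ((deriv ^^ 1) (\<lambda>x. f x - g x) w) \<le> fact 1 * M / r ^ 1"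
    by (rule Cauchy_inequality[OF _ _ r(1)]) (use bound in \<open>simp add: dist_norm\<close>)
  moreover have "deriv (\<lambda>x. f x - g x) w = deriv f w - deriv g w"
    using r by (intro deriv_diff holomorphic_on_imp_differentiable_at[OF f U]
                  holomorphic_on_imp_differentiable_at[OF g U]) auto
  ultimately show ?thesis by (simp add: dist_norm)
qed

lemma parametric_uniformly_close_on_cball:
  fixes G :: "'s::heine_borel \<Rightarrow> 'a::heine_borel \<Rightarrow> 'b::metric_space"
  assumes S: "closed S" and s: "s \<in> S" and R: "cball w R \<subseteq> U"
    and cont: "continuous_on (S \<times> U) (\<lambda>(s, w). G s w)" and e: "e > 0"
  obtains d where "d > 0"
    and "\<And>s' x. s' \<in> S \<Longrightarrow> dist s' s < d \<Longrightarrow> x \<in> cball w R \<Longrightarrow> dist (G s' x) (G s x) < e"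
proof -
  define K where "K = (S \<inter> cball s 1) \<times> cball w R"
  have "compact K"
    unfolding K_def using S by (intro compact_Times) (auto intro: closed_Int_compact)
  moreover have "K \<subseteq> S \<times> U"
    using R K_def by auto
  ultimately have "uniformly_continuous_on K (\<lambda>(s, w). G s w)"
    by (intro compact_uniformly_continuous continuous_on_subset[OF cont])
  then obtain d where d: "d > 0" "\<And>p p'. p \<in> K \<Longrightarrow> p' \<in> K \<Longrightarrow> dist p' p < d \<Longrightarrow>
      dist ((\<lambda>(s, w). G s w) p') ((\<lambda>(s, w). G s w) p) < e"
    by (rule uniformly_continuous_onE[OF _ e]) blast
  show ?thesis
  proof (rule that[of "min d 1"])
    fix s' x assume "s' \<in> S" "dist s' s < min d 1" "x \<in> cball w R"
    then have "(s, x) \<in> K" "(s', x) \<in> K" "dist (s', x) (s, x) < d"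
      using s by (auto simp: K_def dist_commute dist_Pair_Pair)
    then show "dist (G s' x) (G s x) < e"
      using d(2) by fastforce
  qed (use d in auto)
qed

lemma continuous_on_deriv_parametric:
  fixes G :: "real \<Rightarrow> complex \<Rightarrow> complex"
  assumes U: "open U" and S: "closed S" and hol: "\<And>s. s \<in> S \<Longrightarrow> G s holomorphic_on U"
    and cont: "continuous_on (S \<times> U) (\<lambda>(s, w). G s w)"
  shows "continuous_on (S \<times> U) (\<lambda>(s, w). deriv (G s) w)"
  unfolding continuous_on_iff
proof (intro ballI allI impI)
  fix p and e :: real
  assume p: "p \<in> S \<times> U" and e: "0 < e"
  obtain s w where p_eq: "p = (s, w)" and s: "s \<in> S" and w: "w \<in> U"
    using p by auto
  obtain r0 where "r0 > 0" "cball w r0 \<subseteq> U"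
    using U w open_contains_cball by blast
  then obtain r where r: "r > 0" "cball w (2 * r) \<subseteq> U"
    by (intro that[of "r0 / 2"]) auto
  obtain d1 where d1: "d1 > 0" "\<And>s' x. s' \<in> S \<Longrightarrow> dist s' s < d1 \<Longrightarrow> x \<in> cball w (2 * r) \<Longrightarrow>
      dist (G s' x) (G s x) < e * r / 4"
    using parametric_uniformly_close_on_cball[OF S s r(2) cont, of "e * r / 4"] e r by auto
  have "continuous_on U (deriv (G s))"
    using hol[OF s] U by (intro holomorphic_on_imp_continuous_on holomorphic_deriv)
  then obtain d2 where d2: "d2 > 0"
    "\<And>w'. w' \<in> U \<Longrightarrow> dist w' w < d2 \<Longrightarrow> dist (deriv (G s) w') (deriv (G s) w) < e / 2"
    using w e unfolding continuous_on_iff by (meson half_gt_zero)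
  show "\<exists>d>0. \<forall>p'\<in>S \<times> U. dist p' p < d \<longrightarrow>
      dist ((\<lambda>(s, w). deriv (G s) w) p') ((\<lambda>(s, w). deriv (G s) w) p) < e"
  proof (intro exI[of _ "min (min d1 d2) r"] conjI ballI impI)
    show "0 < min (min d1 d2) r"
      using d1 d2 r by auto
    fix p' assume p': "p' \<in> S \<times> U" "dist p' p < min (min d1 d2) r"
    obtain s' w' where p'_eq: "p' = (s', w')" and s': "s' \<in> S" and w': "w' \<in> U"
      using p' by auto
    have ds: "dist s' s < min (min d1 d2) r" and dw: "dist w' w < min (min d1 d2) r"
      using dist_fst_le[of p' p] dist_snd_le[of p' p] p'(2) p_eq p'_eq by simp_all
    have near: "x \<in> cball w (2 * r)" if "dist w' x \<le> r" for x
      using that dw dist_triangle[of w x w'] by (simp add: dist_commute)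
    have "dist (deriv (G s') w') (deriv (G s) w') \<le> (e * r / 4) / r"
    proof (rule dist_deriv_le_sphere_bound[OF hol[OF s'] hol[OF s] U r(1)])
      show "cball w' r \<subseteq> U"
        using near r(2) by auto
      show "dist (G s' x) (G s x) \<le> e * r / 4" if "dist w' x = r" for x
        using d1(2)[OF s' _ near[of x]] ds that by simp
    qed
    then have "dist (deriv (G s') w') (deriv (G s) w') \<le> e / 4"
      using r by simp
    moreover have "dist (deriv (G s) w') (deriv (G s) w) < e / 2"
      using d2(2)[OF w'] dw by simp
    ultimately have "dist (deriv (G s') w') (deriv (G s) w) < e"
      using dist_triangle[of "deriv (G s') w'" "deriv (G s) w" "deriv (G s) w'"] e by simp
    then show "dist ((\<lambda>(s, w). deriv (G s) w) p') ((\<lambda>(s, w). deriv (G s) w) p) < e"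
      by (simp add: p_eq p'_eq)
  qed
qed

lemma parametric_integral_has_field_derivative:
  fixes G :: "real \<Rightarrow> complex \<Rightarrow> complex"
  assumes U: "open U" and hol: "\<And>s. s \<in> {a..b} \<Longrightarrow> G s holomorphic_on U"
    and cont: "continuous_on ({a..b} \<times> U) (\<lambda>(s, w). G s w)" and w: "w \<in> U"
  shows "((\<lambda>w. integral {a..b} (\<lambda>s. G s w)) has_field_derivative
           integral {a..b} (\<lambda>s. deriv (G s) w)) (at w)"
proof -
  obtain r where r: "r > 0" "ball w r \<subseteq> U"
    using U w open_contains_ball by blast
  have cont': "continuous_on ({a..b} \<times> U) (\<lambda>(s, w). deriv (G s) w)"
    by (rule continuous_on_deriv_parametric[OF U _ hol cont]) auto
  have "((\<lambda>x. integral (cbox a b) (\<lambda>t. G t x)) has_field_derivative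
          integral (cbox a b) (\<lambda>t. deriv (G t) w)) (at w within ball w r)"
  proof (rule leibniz_rule_field_derivative[where fx="\<lambda>x t. deriv (G t) x"])
    show "((\<lambda>x. G t x) has_field_derivative deriv (G t) x) (at x within ball w r)"
      if "x \<in> ball w r" "t \<in> cbox a b" for x t
      using holomorphic_derivI[OF hol U] that r by (auto simp: cbox_interval)
    show "(\<lambda>t. G t x) integrable_on cbox a b" if "x \<in> ball w r" for x
    proof -
      have "continuous_on {a..b} (\<lambda>t. G t x)"
        by (rule continuous_on_compose_Pair[OF cont])
           (use that r in \<open>auto intro: continuous_intros\<close>)
      then show ?thesis by (simp add: integrable_continuous_real cbox_interval)
    qed
    show "continuous_on (ball w r \<times> cbox a b) (\<lambda>(x, t). deriv (G t) x)"
      by (rule continuous_on_subset[OF continuous_on_swap_args[OF cont']])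
         (use r in \<open>auto simp: cbox_interval\<close>)
  qed (use r in simp_all)
  moreover have "at w within ball w r = at w"
    using r(1) by (intro at_within_open) auto
  ultimately show ?thesis by (simp add: cbox_interval)
qed

lemma parametric_integral_holomorphic_on:
  fixes G :: "real \<Rightarrow> complex \<Rightarrow> complex"
  assumes "open U" and "\<And>s. s \<in> {a..b} \<Longrightarrow> G s holomorphic_on U"
    and "continuous_on ({a..b} \<times> U) (\<lambda>(s, w). G s w)"
  shows "(\<lambda>w. integral {a..b} (\<lambda>s. G s w)) holomorphic_on U"
  using parametric_integral_has_field_derivative[OF assms] \<open>open U\<close>
  by (auto simp: holomorphic_on_open)

locale holomorphic_semiflow =
  fixes U :: "complex set" and F :: "real \<Rightarrow> complex \<Rightarrow> complex"
  assumes open_domain: "open U"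
    and holomorphic_flow: "\<And>t. t \<ge> 0 \<Longrightarrow> F t holomorphic_on U"
    and flow_maps_into: "\<And>t z. t \<ge> 0 \<Longrightarrow> z \<in> U \<Longrightarrow> F t z \<in> U"
    and flow_zero: "\<And>z. z \<in> U \<Longrightarrow> F 0 z = z"
    and flow_add: "\<And>s t z. s \<ge> 0 \<Longrightarrow> t \<ge> 0 \<Longrightarrow> z \<in> U \<Longrightarrow> F (t + s) z = F t (F s z)"
    and continuous_flow: "continuous_on ({0..} \<times> U) (\<lambda>(t, z). F t z)"
begin

lemma continuous_on_orbit: "z \<in> U \<Longrightarrow> continuous_on {0..} (\<lambda>s. F s z)"
  by (rule continuous_on_compose_Pair[OF continuous_flow]) (auto intro: continuous_intros)

definition orbit_integral :: "real \<Rightarrow> complex \<Rightarrow> complex" where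
  "orbit_integral \<tau> w = integral {0..\<tau>} (\<lambda>s. F s w)"

lemma orbit_integral_has_field_derivative:
  assumes "\<tau> \<ge> 0" and "w \<in> U"
  shows "(orbit_integral \<tau> has_field_derivative integral {0..\<tau>} (\<lambda>s. deriv (F s) w)) (at w)"
  unfolding orbit_integral_def[abs_def]
  by (rule parametric_integral_has_field_derivative[OF open_domain _ _ \<open>w \<in> U\<close>])
     (use assms in \<open>auto intro: holomorphic_flow continuous_on_subset[OF continuous_flow]\<close>)

lemma orbit_integral_holomorphic: "\<tau> \<ge> 0 \<Longrightarrow> orbit_integral \<tau> holomorphic_on U"
  using orbit_integral_has_field_derivative open_domain by (auto simp: holomorphic_on_open)

lemma holomorphic_deriv_orbit_integral: "\<tau> \<ge> 0 \<Longrightarrow> deriv (orbit_integral \<tau>) holomorphic_on U"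
  by (intro holomorphic_deriv orbit_integral_holomorphic open_domain)

lemma orbit_integral_along_orbit:
  assumes "z \<in> U" and "t \<ge> 0"
  shows "orbit_integral \<tau> (F t z) = integral {0..\<tau>} (\<lambda>s. F (s + t) z)"
  unfolding orbit_integral_def by (rule integral_cong) (use assms flow_add in auto)

lemma orbit_has_vector_derivative_quotient:
  assumes z: "z \<in> U" and t: "t \<ge> 0" and \<tau>: "\<tau> \<ge> 0"
    and nz: "deriv (orbit_integral \<tau>) (F t z) \<noteq> 0"
  shows "((\<lambda>s. F s z) has_vector_derivative
           (F \<tau> (F t z) - F t z) / deriv (orbit_integral \<tau>) (F t z)) (at t within {0..})"
proof -
  have "((\<lambda>s. F s z) has_vector_derivative
          (F (t + \<tau>) z - F t z) / deriv (orbit_integral \<tau>) (F t z)) (at t within {0..})"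
  proof (rule has_vector_derivative_inner_from_chain[OF _ nz])
    show "(orbit_integral \<tau> has_field_derivative deriv (orbit_integral \<tau>) (F t z)) (at (F t z))"
      by (rule holomorphic_derivI[OF orbit_integral_holomorphic[OF \<tau>] open_domain flow_maps_into[OF t z]])
    show "continuous (at t within {0..}) (\<lambda>s. F s z)"
      using continuous_on_orbit[OF z] t by (simp add: continuous_on_eq_continuous_within)
    show "orbit_integral \<tau> (F y z) = integral {0..\<tau>} (\<lambda>s. F (s + y) z)" if "y \<in> {0..}" for y
      using orbit_integral_along_orbit[OF z] that by simp
    show "((\<lambda>y. integral {0..\<tau>} (\<lambda>s. F (s + y) z)) has_vector_derivative F (t + \<tau>) z - F t z)
            (at t within {0..})"
      by (rule integral_shift_has_vector_derivative[OF continuous_on_orbit[OF z] t \<tau>])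
  qed (use t in auto)
  then show ?thesis
    using flow_add[OF t \<tau> z] by (simp add: add.commute)
qed

lemma deriv_orbit_integral_nonzero:
  assumes w: "w \<in> U"
  obtains \<tau> where "\<tau> > 0" and "deriv (orbit_integral \<tau>) w \<noteq> 0"
proof -
  have "(F 0 has_field_derivative 1) (at w)"
    by (rule has_field_derivative_transform_within_open[OF DERIV_ident open_domain w])
       (simp add: flow_zero)
  then have deriv_F0: "deriv (F 0) w = 1"
    by (rule DERIV_imp_deriv)
  have "continuous_on ({0..} \<times> U) (\<lambda>(s, w). deriv (F s) w)"
    by (rule continuous_on_deriv_parametric[OF open_domain _ _ continuous_flow])
       (auto intro: holomorphic_flow)
  then have "continuous_on {0..} (\<lambda>s. deriv (F s) w)"
    by (rule continuous_on_compose_Pair) (use w in \<open>auto intro: continuous_intros\<close>)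
  then obtain d where d: "d > 0"
    "\<And>s. s \<in> {0..} \<Longrightarrow> dist s 0 < d \<Longrightarrow> dist (deriv (F s) w) 1 < 1/2"
    unfolding continuous_on_iff using deriv_F0
    by (metis atLeast_iff order_refl half_gt_zero zero_less_one)
  define \<tau> where "\<tau> = d / 2"
  have \<tau>: "\<tau> > 0"
    using d by (simp add: \<tau>_def)
  have cont: "continuous_on {0..\<tau>} (\<lambda>s. deriv (F s) w)"
    by (rule continuous_on_subset[OF \<open>continuous_on {0..} _\<close>]) auto
  have "deriv (orbit_integral \<tau>) w - of_real \<tau> = integral {0..\<tau>} (\<lambda>s. deriv (F s) w - 1)"
    using DERIV_imp_deriv[OF orbit_integral_has_field_derivative[OF _ w]] \<tau>
      integral_diff[OF integrable_continuous_real[OF cont] integrable_const_ivl[of 1 0 \<tau>]]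
    by (simp add: scaleR_conv_of_real)
  also have "norm \<dots> \<le> 1/2 * (\<tau> - 0)"
  proof (rule integral_bound)
    show "continuous_on {0..\<tau>} (\<lambda>s. deriv (F s) w - 1)"
      by (intro continuous_intros cont)
    show "norm (deriv (F s) w - 1) \<le> 1/2" if "s \<in> {0..\<tau>}" for s
      using d(2)[of s] that d(1) by (simp add: \<tau>_def dist_norm)
  qed (use \<tau> in simp)
  finally have "norm (deriv (orbit_integral \<tau>) w - of_real \<tau>) \<le> \<tau> / 2"
    by simp
  then have "deriv (orbit_integral \<tau>) w \<noteq> 0"
    using \<tau> by auto
  with \<tau> show ?thesis
    by (rule that)
qed

definition generator :: "complex \<Rightarrow> complex" where
  "generator w = vector_derivative (\<lambda>s. F s w) (at 0 within {0..})"

lemma generator_eq_quotient: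
  assumes w: "w \<in> U" and \<tau>: "\<tau> \<ge> 0" and nz: "deriv (orbit_integral \<tau>) w \<noteq> 0"
  shows "generator w = (F \<tau> w - w) / deriv (orbit_integral \<tau>) w"
proof -
  have "((\<lambda>s. F s w) has_vector_derivative (F \<tau> w - w) / deriv (orbit_integral \<tau>) w)
          (at 0 within {0..})"
    using orbit_has_vector_derivative_quotient[OF w order_refl \<tau>] nz flow_zero[OF w] by simp
  moreover have "at (0::real) within {0..} \<noteq> bot"
    by (simp add: at_within_Ici_at_right)
  ultimately show ?thesis
    unfolding generator_def by (rule vector_derivative_within[rotated])
qed

lemma orbit_has_vector_derivative:
  assumes z: "z \<in> U" and t: "t \<ge> 0"
  shows "((\<lambda>s. F s z) has_vector_derivative generator (F t z)) (at t within {0..})"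
proof -
  obtain \<tau> where \<tau>: "\<tau> > 0" and nz: "deriv (orbit_integral \<tau>) (F t z) \<noteq> 0"
    using deriv_orbit_integral_nonzero[OF flow_maps_into[OF t z]] by blast
  then show ?thesis
    using orbit_has_vector_derivative_quotient[OF z t _ nz]
      generator_eq_quotient[OF flow_maps_into[OF t z] _ nz] by simp
qed

lemma generator_analytic: "generator analytic_on U"
  unfolding analytic_on_def
proof
  fix w assume w: "w \<in> U"
  obtain \<tau> where \<tau>: "\<tau> > 0" and nz: "deriv (orbit_integral \<tau>) w \<noteq> 0"
    using deriv_orbit_integral_nonzero[OF w] by blast
  have cont: "isCont (deriv (orbit_integral \<tau>)) w"
    using holomorphic_deriv_orbit_integral \<tau> open_domain w
    by (meson holomorphic_on_imp_continuous_on continuous_on_eq_continuous_at less_imp_le)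
  obtain e where e: "e > 0" "\<And>y. dist w y < e \<Longrightarrow> deriv (orbit_integral \<tau>) y \<noteq> 0"
    using continuous_at_avoid[OF cont nz] by blast
  obtain r0 where r0: "r0 > 0" "ball w r0 \<subseteq> U"
    using open_domain w open_contains_ball by blast
  define r where "r = min e r0"
  have ball: "ball w r \<subseteq> U" "\<And>y. y \<in> ball w r \<Longrightarrow> deriv (orbit_integral \<tau>) y \<noteq> 0"
    using e r0 by (auto simp: r_def)
  have "(\<lambda>y. (F \<tau> y - y) / deriv (orbit_integral \<tau>) y) holomorphic_on ball w r"
    using \<tau> ball
    by (intro holomorphic_on_divide holomorphic_on_diff holomorphic_on_ident
          holomorphic_on_subset[OF holomorphic_flow ball(1)]
          holomorphic_on_subset[OF holomorphic_deriv_orbit_integral ball(1)]) auto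
  then have "generator holomorphic_on ball w r"
  proof (rule holomorphic_transform)
    fix y assume "y \<in> ball w r"
    then show "(F \<tau> y - y) / deriv (orbit_integral \<tau>) y = generator y"
      using generator_eq_quotient[of y \<tau>] ball \<tau> by auto
  qed
  moreover have "r > 0"
    using e r0 by (simp add: r_def)
  ultimately show "\<exists>e>0. generator holomorphic_on ball w e"
    by blast
qed

end

locale holomorphic_cocycle = holomorphic_semiflow +
  fixes H :: "real \<Rightarrow> complex \<Rightarrow> complex"
  assumes cocycle_holomorphic: "\<And>t. t \<ge> 0 \<Longrightarrow> H t holomorphic_on U"
    and cocycle_add: "\<And>s t z. s \<ge> 0 \<Longrightarrow> t \<ge> 0 \<Longrightarrow> z \<in> U \<Longrightarrow>
                        H (t + s) z = H t (F s z) - F s z + H s z"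
    and cocycle_continuous: "continuous_on ({0..} \<times> U) (\<lambda>(t, z). H t z)"
begin

lemma continuous_on_cocycle_orbit: "z \<in> U \<Longrightarrow> continuous_on {0..} (\<lambda>s. H s z)"
  by (rule continuous_on_compose_Pair[OF cocycle_continuous]) (auto intro: continuous_intros)

definition cocycle_average :: "complex \<Rightarrow> complex" where
  "cocycle_average w = integral {0..1} (\<lambda>s. H s w)"

lemma cocycle_average_holomorphic: "cocycle_average holomorphic_on U"
  unfolding cocycle_average_def[abs_def]
  by (rule parametric_integral_holomorphic_on[OF open_domain])
     (auto intro: cocycle_holomorphic continuous_on_subset[OF cocycle_continuous])

lemma cocycle_eq_integral_along_orbit:
  assumes z: "z \<in> U" and t: "t \<ge> 0"
  shows "H t z = integral {0..1} (\<lambda>s. H (s + t) z) - cocycle_average (F t z) + F t z"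
proof -
  have "(\<lambda>s. H s (F t z)) integrable_on {0..1}"
    by (intro integrable_continuous_real continuous_on_subset[OF continuous_on_cocycle_orbit])
       (use flow_maps_into t z in auto)
  then have "integral {0..1} (\<lambda>s. H s (F t z) + (H t z - F t z)) =
               cocycle_average (F t z) + (H t z - F t z)"
    unfolding cocycle_average_def by (subst integral_add) auto
  moreover have "integral {0..1} (\<lambda>s. H (s + t) z) =
                   integral {0..1} (\<lambda>s. H s (F t z) + (H t z - F t z))"
    by (rule integral_cong) (use cocycle_add[of t _ z] t z in auto)
  ultimately show ?thesis
    by (simp add: algebra_simps)
qed

text \<open>This is the \<open>t\<close>-derivative of the right-hand side of \<open>cocycle_eq_integral_along_orbit\<close>.\<close>
definition cocycle_generator :: "complex \<Rightarrow> complex" where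
  "cocycle_generator w = H 1 w - w - generator w * deriv cocycle_average w + generator w"

lemma cocycle_generator_analytic: "cocycle_generator analytic_on U"
proof -
  have "deriv cocycle_average analytic_on U"
    using cocycle_average_holomorphic open_domain by (simp add: analytic_on_open holomorphic_deriv)
  moreover have "H 1 analytic_on U"
    using cocycle_holomorphic[of 1] open_domain by (simp add: analytic_on_open)
  ultimately show ?thesis
    unfolding cocycle_generator_def[abs_def]
    by (intro analytic_on_add analytic_on_diff analytic_on_mult analytic_on_ident generator_analytic)
qed

lemma cocycle_has_vector_derivative:
  assumes z: "z \<in> U" and t: "t \<ge> 0"
  shows "((\<lambda>s. H s z) has_vector_derivative cocycle_generator (F t z)) (at t within {0..})"
proof -
  have window: "((\<lambda>s. integral {0..1} (\<lambda>r. H (r + s) z)) has_vector_derivative H (t + 1) z - H t z)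
                  (at t within {0..})"
    using integral_shift_has_vector_derivative[OF continuous_on_cocycle_orbit[OF z] t, of 1] by simp
  have average: "((\<lambda>s. cocycle_average (F s z)) has_vector_derivative
                    generator (F t z) * deriv cocycle_average (F t z)) (at t within {0..})"
    using field_vector_diff_chain_within[OF orbit_has_vector_derivative[OF z t]
        holomorphic_derivI[OF cocycle_average_holomorphic open_domain flow_maps_into[OF t z]]]
    by (simp add: o_def)
  have "((\<lambda>s. integral {0..1} (\<lambda>r. H (r + s) z) - cocycle_average (F s z) + F s z)
           has_vector_derivative (H (t + 1) z - H t z)
             - generator (F t z) * deriv cocycle_average (F t z) + generator (F t z))
         (at t within {0..})"
    by (intro has_vector_derivative_add has_vector_derivative_diff window average
          orbit_has_vector_derivative z t)
  then have "((\<lambda>s. H s z) has_vector_derivative (H (t + 1) z - H t z)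
               - generator (F t z) * deriv cocycle_average (F t z) + generator (F t z))
             (at t within {0..})"
    by (rule has_vector_derivative_transform[rotated 2])
       (use cocycle_eq_integral_along_orbit z t in auto)
  moreover have "H (t + 1) z - H t z = H 1 (F t z) - F t z"
    using cocycle_add[OF t _ z, of 1] by (simp add: add.commute)
  ultimately show ?thesis
    by (simp add: cocycle_generator_def)
qed

end

theorem theorem4p2:
  fixes U :: "complex set"
    and F H :: "real \<Rightarrow> complex \<Rightarrow> complex"
  assumes "open U"
    and "\<And>t. t \<ge> 0 \<Longrightarrow> F t analytic_on U"
    and "\<And>t. t \<ge> 0 \<Longrightarrow> H t analytic_on U"
    and "\<And>t. t \<ge> 0 \<Longrightarrow> F t ` U \<subseteq> U"
    and "\<And>t. t \<ge> 0 \<Longrightarrow> H t ` U \<subseteq> U"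
    and "\<And>z. z \<in> U \<Longrightarrow> F 0 z = z"
    and "\<And>z. z \<in> U \<Longrightarrow> H 0 z = z"
    and "\<And>s t z. s \<ge> 0 \<Longrightarrow> t \<ge> 0 \<Longrightarrow> z \<in> U \<Longrightarrow> F (t + s) z = F t (F s z)"
    and "\<And>s t z. s \<ge> 0 \<Longrightarrow> t \<ge> 0 \<Longrightarrow> z \<in> U \<Longrightarrow>
           H (t + s) z = H t (F s z) - F s z + H s z"
    and "continuous_on ({0..} \<times> U) (\<lambda>(t, z). F t z)"
    and "continuous_on ({0..} \<times> U) (\<lambda>(t, z). H t z)"
  shows "\<exists>A1 A2. A1 analytic_on U \<and> A2 analytic_on U \<and>
           (\<forall>z\<in>U. \<forall>t\<ge>0.
              ((\<lambda>s. H s z) has_vector_derivative A1 (F t z)) (at t within {0..}) \<and>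
              ((\<lambda>s. F s z) has_vector_derivative A2 (F t z)) (at t within {0..}))"
proof -
  interpret holomorphic_cocycle U F H
    by unfold_locales (use assms in \<open>auto simp: analytic_imp_holomorphic image_subset_iff\<close>)
  show ?thesis
    using cocycle_generator_analytic generator_analytic
      cocycle_has_vector_derivative orbit_has_vector_derivative by blast
qed

end
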